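(* Let $G_1$ be a group and $k\ge1$ an integer such that $|G_1:C_{G_1}(a)|\le k$ for every $a\in G_1$. Let $n,m\ge0$, let $G\le G_1^n$ be a subgroup, let $w(\bar x,\bar y)$ be a group word in the variables $\bar x=(x_1,\dots,x_n)$, $\bar y=(y_1,\dots,y_m)$ and their inverses, and let $\bar g\in G_1^m$, $c\in G_1$. If the set $\{\bar h\in G:w(\bar h,\bar g)=c\}$ is $2k^{n^2+mn}$-large in $G$, then $w(\bar h,\bar g)=c$ for all $\bar h\in G$.
   Context: A subset $X\subseteq G$ is $k$-large in $G$ if the intersection of any $k$ left translates $\bar a_1X\cap\dots\cap\bar a_kX$ ($\bar a_i\in G$) is non-empty. *)

theory Defs
  imports "HOL-Algebra.Algebra"
begin

definition centralizer_elem :: "('a, 'b) monoid_scheme \<Rightarrow> 'a \<Rightarrow> 'a set" where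
  "centralizer_elem G a = {x \<in> carrier G. x \<otimes>\<^bsub>G\<^esub> a = a \<otimes>\<^bsub>G\<^esub> x}"

definition k_large :: "('a, 'b) monoid_scheme \<Rightarrow> 'a set \<Rightarrow> nat \<Rightarrow> 'a set \<Rightarrow> bool" where
  "k_large P H K S \<longleftrightarrow>
     (\<forall>a :: nat \<Rightarrow> 'a. (\<forall>i<K. a i \<in> H) \<longrightarrow> (\<Inter>i<K. l_coset P (a i) S) \<noteq> {})"

text \<open>Group words in variables x_i (Inl i) and y_j (Inr j) and their inverses:
  a letter (v, True) stands for v, a letter (v, False) for v inverse.\<close>
type_synonym gword = "((nat + nat) \<times> bool) list"

definition word_in_vars :: "nat \<Rightarrow> nat \<Rightarrow> gword \<Rightarrow> bool" where
  "word_in_vars n m w \<longleftrightarrow>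
     (\<forall>(v, b) \<in> set w. case v of Inl i \<Rightarrow> i < n | Inr j \<Rightarrow> j < m)"

fun word_eval :: "('a, 'b) monoid_scheme \<Rightarrow> gword \<Rightarrow> (nat \<Rightarrow> 'a) \<Rightarrow> (nat \<Rightarrow> 'a) \<Rightarrow> 'a" where
  "word_eval G [] h g = \<one>\<^bsub>G\<^esub>"
| "word_eval G ((v, b) # w) h g =
     (let z = case_sum h g v in if b then z else inv\<^bsub>G\<^esub> z) \<otimes>\<^bsub>G\<^esub> word_eval G w h g"

end

theory Submission
  imports Defs
begin

(* Let S = {h in G. w(h, g) = c}.  Fix h in G and let C be the set of d in G whose coordinates commute with all coordinates of h
   and of g.  It is cut out by n(n+m) centralizer conditions, each of index at most k, so at most
   k^(n^2+mn) cosets r C cover G.  Largeness gives a common point x of the 2 k^(n^2+mn) translates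
   r S and r h^-1 S; taking r with x in r C and writing x = r d yields d in C with d in S and
   h d in S.  Since d commutes coordinatewise with h and g, w(hd, g) = w(h, g) w(d, 1) and
   w(d, g) = w(1, g) w(d, 1), whence w(h, g) = w(1, g): the word is constant on G, and the
   constant is c because S is nonempty. *)

lemma word_in_vars_Cons [simp]:
  "word_in_vars n m ((v, b) # w) \<longleftrightarrow>
     (case v of Inl i \<Rightarrow> i < n | Inr j \<Rightarrow> j < m) \<and> word_in_vars n m w"
  by (auto simp: word_in_vars_def)

definition letter_eval ::
    "('a, 'b) monoid_scheme \<Rightarrow> (nat + nat) \<times> bool \<Rightarrow> (nat \<Rightarrow> 'a) \<Rightarrow> (nat \<Rightarrow> 'a) \<Rightarrow> 'a"
  where "letter_eval G l h g = (let z = case_sum h g (fst l) in if snd l then z else inv\<^bsub>G\<^esub> z)"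

lemma word_eval_Cons_letter:
  "word_eval G (l # w) h g = letter_eval G l h g \<otimes>\<^bsub>G\<^esub> word_eval G w h g"
  by (cases l) (simp add: letter_eval_def)

lemma word_eval_cong:
  assumes "word_in_vars n m w" "\<forall>i<n. h i = h' i"
  shows "word_eval G w h g = word_eval G w h' g"
  using assms(1)
proof (induction w)
  case (Cons l w)
  then show ?case by (cases l) (auto simp: assms(2) split: sum.splits)
qed simp

lemma (in group) letter_eval_in_subgroup:
  assumes H: "subgroup H G" and v: "case v of Inl i \<Rightarrow> i < n | Inr j \<Rightarrow> j < m"
    and "\<forall>i<n. h i \<in> H" "\<forall>j<m. g j \<in> H"
  shows "letter_eval G (v, b) h g \<in> H"
  using assms(3,4) v subgroup.m_inv_closed[OF H]
  by (auto simp: letter_eval_def Let_def split: sum.splits)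

lemma (in group) word_eval_in_subgroup:
  assumes H: "subgroup H G" and "word_in_vars n m w" "\<forall>i<n. h i \<in> H" "\<forall>j<m. g j \<in> H"
  shows "word_eval G w h g \<in> H"
  using assms(2)
proof (induction w)
  case Nil
  then show ?case by (simp add: subgroup.one_closed[OF H])
next
  case (Cons l w)
  then show ?case
    using letter_eval_in_subgroup[OF H _ assms(3,4)] subgroup.m_closed[OF H]
    by (cases l) (simp add: word_eval_Cons_letter)
qed

lemma (in group) subgroup_centralizer_elem:
  assumes "a \<in> carrier G"
  shows "subgroup (centralizer_elem G a) G"
proof
  show "x \<otimes> y \<in> centralizer_elem G a" if "x \<in> centralizer_elem G a" "y \<in> centralizer_elem G a" for x y
    using that assms unfolding centralizer_elem_def by (auto simp: m_assoc) (metis m_assoc)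
  show "inv x \<in> centralizer_elem G a" if "x \<in> centralizer_elem G a" for x
  proof -
    have "x \<in> carrier G" "x \<otimes> a = a \<otimes> x" using that unfolding centralizer_elem_def by auto
    then have "inv x \<otimes> a = a \<otimes> inv x"
      using assms by (metis inv_closed inv_solve_left inv_solve_right m_assoc m_closed)
    then show ?thesis using \<open>x \<in> carrier G\<close> unfolding centralizer_elem_def by auto
  qed
qed (use assms in \<open>auto simp: centralizer_elem_def\<close>)

lemma centralizer_elem_sym:
  "a \<in> carrier G \<Longrightarrow> b \<in> centralizer_elem G a \<Longrightarrow> a \<in> centralizer_elem G b"
  by (simp add: centralizer_elem_def)

lemma (in group) letter_eval_mult_commuting:
  assumes v: "case v of Inl i \<Rightarrow> i < n | Inr j \<Rightarrow> j < m"
    and h: "\<forall>i<n. h i \<in> carrier G" and g: "\<forall>j<m. g j \<in> carrier G"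
    and dh: "\<forall>i<n. d i \<in> centralizer_elem G (h i)"
  shows "letter_eval G (v, b) (\<lambda>i. h i \<otimes> d i) g
    = letter_eval G (v, b) h g \<otimes> letter_eval G (v, b) d (\<lambda>_. \<one>)"
proof (cases v)
  case (Inl i)
  then have i: "i < n" using v by simp
  have d: "d i \<in> carrier G" and "h i \<otimes> d i = d i \<otimes> h i"
    using dh i unfolding centralizer_elem_def by auto
  then have "inv (h i \<otimes> d i) = inv (h i) \<otimes> inv (d i)"
    using h i by (simp add: inv_mult_group)
  then show ?thesis by (simp add: letter_eval_def Inl Let_def)
next
  case (Inr j)
  then show ?thesis using g v by (simp add: letter_eval_def Let_def)
qed

lemma (in group) word_eval_mult_commuting:
  assumes w: "word_in_vars n m w" and h: "\<forall>i<n. h i \<in> carrier G" and g: "\<forall>j<m. g j \<in> carrier G"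
    and dh: "\<forall>i<n. \<forall>i'<n. d i \<in> centralizer_elem G (h i')"
    and dg: "\<forall>i<n. \<forall>j<m. d i \<in> centralizer_elem G (g j)"
  shows "word_eval G w (\<lambda>i. h i \<otimes> d i) g = word_eval G w h g \<otimes> word_eval G w d (\<lambda>_. \<one>)"
  using w
proof (induction w)
  case (Cons l w)
  obtain v b where l: "l = (v, b)" by force
  have w: "word_in_vars n m w" and v: "case v of Inl i \<Rightarrow> i < n | Inr j \<Rightarrow> j < m"
    using Cons.prems by (auto simp: l)
  have d: "\<forall>i<n. d i \<in> carrier G"
    using dh unfolding centralizer_elem_def by blast
  define W where "W = word_eval G w h g"
  define Wd where "Wd = word_eval G w d (\<lambda>_. \<one>)"
  define x where "x = letter_eval G l h g"
  define y where "y = letter_eval G l d (\<lambda>_. \<one>)"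
  have W: "W \<in> carrier G" and Wd: "Wd \<in> carrier G" and x: "x \<in> carrier G" and y: "y \<in> carrier G"
    using word_eval_in_subgroup[OF subgroup_self w] letter_eval_in_subgroup[OF subgroup_self v] h g d
    unfolding W_def Wd_def x_def y_def l by auto
  have "W \<in> centralizer_elem G (d i)" if "i < n" for i
    unfolding W_def using h g dh dg d that
    by (intro word_eval_in_subgroup[OF subgroup_centralizer_elem w]) (auto simp: centralizer_elem_def)
  then have "\<forall>i<n. d i \<in> centralizer_elem G W"
    using d by (simp add: centralizer_elem_sym)
  then have "y \<in> centralizer_elem G W"
    using letter_eval_in_subgroup[OF subgroup_centralizer_elem[OF W] v] W
    unfolding y_def l by (simp add: centralizer_elem_def)
  then have "x \<otimes> y \<otimes> (W \<otimes> Wd) = x \<otimes> W \<otimes> (y \<otimes> Wd)"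
    using x y W Wd unfolding centralizer_elem_def by (simp add: m_assoc) (metis m_assoc)
  moreover have "letter_eval G l (\<lambda>i. h i \<otimes> d i) g = x \<otimes> y"
    using letter_eval_mult_commuting[OF v h g] dh unfolding x_def y_def l by simp
  ultimately show ?case
    using Cons.IH[OF w] by (simp add: word_eval_Cons_letter W_def Wd_def x_def y_def)
qed simp

lemma (in group) word_eval_eq_at_one_if_commuting_shift:
  assumes w: "word_in_vars n m w" and h: "\<forall>i<n. h i \<in> carrier G" and g: "\<forall>j<m. g j \<in> carrier G"
    and dh: "\<forall>i<n. \<forall>i'<n. d i \<in> centralizer_elem G (h i')"
    and dg: "\<forall>i<n. \<forall>j<m. d i \<in> centralizer_elem G (g j)"
    and shift: "word_eval G w (\<lambda>i. h i \<otimes> d i) g = word_eval G w d g"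
  shows "word_eval G w h g = word_eval G w (\<lambda>_. \<one>) g"
proof -
  have d: "\<forall>i<n. d i \<in> carrier G"
    using dh unfolding centralizer_elem_def by blast
  have "word_eval G w d g = word_eval G w (\<lambda>i. \<one> \<otimes> d i) g"
    using d by (intro word_eval_cong[OF w]) simp
  also have "\<dots> = word_eval G w (\<lambda>_. \<one>) g \<otimes> word_eval G w d (\<lambda>_. \<one>)"
    using g d dg by (intro word_eval_mult_commuting[OF w]) (auto simp: centralizer_elem_def)
  finally have "word_eval G w h g \<otimes> word_eval G w d (\<lambda>_. \<one>)
      = word_eval G w (\<lambda>_. \<one>) g \<otimes> word_eval G w d (\<lambda>_. \<one>)"
    using shift word_eval_mult_commuting[OF w h g dh dg] by simp
  moreover have "word_eval G w h g \<in> carrier G" "word_eval G w (\<lambda>_. \<one>) g \<in> carrier G"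
    "word_eval G w d (\<lambda>_. \<one>) \<in> carrier G"
    using h g d by (auto intro: word_eval_in_subgroup[OF subgroup_self w])
  ultimately show ?thesis by simp
qed

lemma finite_image_representatives:
  assumes "f ` A \<subseteq> B" "finite B"
  obtains R where "R \<subseteq> A" "finite R" "card R \<le> card B" "\<And>x. x \<in> A \<Longrightarrow> \<exists>r\<in>R. f r = f x"
proof
  let ?R = "inv_into A f ` f ` A"
  have "finite (f ` A)" using assms finite_subset by blast
  then show "finite ?R" by simp
  show "card ?R \<le> card B"
    using card_image_le[OF \<open>finite (f ` A)\<close>, of "inv_into A f"] card_mono[OF assms(2,1)] by linarith
  show "?R \<subseteq> A" by (auto intro: inv_into_into)
  show "\<exists>r\<in>?R. f r = f x" if "x \<in> A" for x
  proof
    show "inv_into A f (f x) \<in> ?R" using that by blast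
    show "f (inv_into A f (f x)) = f x" using that by (simp add: f_inv_into_f)
  qed
qed

lemma k_large_common_point:
  assumes "k_large P H K S" "finite A" "A \<noteq> {}" "A \<subseteq> H" "card A \<le> K"
  obtains x where "\<And>a. a \<in> A \<Longrightarrow> x \<in> a <#\<^bsub>P\<^esub> S"
proof -
  obtain as where as: "set as = A" "distinct as"
    using finite_distinct_list[OF assms(2)] by blast
  have len: "0 < length as" "length as \<le> K"
    using as assms(3,5) distinct_card[OF as(2)] by auto
  define a where "a i = as ! (i mod length as)" for i
  have "a i \<in> H" for i
    using as len assms(4) unfolding a_def by auto
  then have "(\<Inter>i<K. a i <#\<^bsub>P\<^esub> S) \<noteq> {}"
    using assms(1) unfolding k_large_def by blast
  then obtain x where x: "x \<in> (\<Inter>i<K. a i <#\<^bsub>P\<^esub> S)"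
    by blast
  have "x \<in> b <#\<^bsub>P\<^esub> S" if "b \<in> A" for b
  proof -
    have "b \<in> set as" using that as(1) by simp
    then obtain t where t: "t < length as" "as ! t = b"
      by (auto simp: in_set_conv_nth)
    then have "a t = b" "t < K" using len unfolding a_def by auto
    then show ?thesis using x by auto
  qed
  then show ?thesis by (rule that)
qed

lemma (in group) rcos_inv_eqD:
  assumes H: "subgroup H G" and a: "a \<in> carrier G" and b: "b \<in> carrier G"
    and eq: "H #> inv a = H #> inv b"
  shows "inv a \<otimes> b \<in> H"
proof -
  have "inv b \<in> H #> inv a"
    using repr_independenceD[OF H _ eq] b by simp
  then have "inv b \<otimes> inv (inv a) \<in> H"
    using subgroup.rcos_module_imp[OF H is_group] a by blast
  then have "inv (inv b \<otimes> a) \<in> H"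
    using subgroup.m_inv_closed[OF H] a by simp
  then show ?thesis
    using a b by (simp add: inv_mult_group)
qed

lemma (in group) centralizing_representatives:
  assumes index: "\<And>a. a \<in> carrier G \<Longrightarrow>
      finite (rcosets (centralizer_elem G a)) \<and> card (rcosets (centralizer_elem G a)) \<le> k"
    and H: "subgroup H (product_group {..<n} (\<lambda>_. G))" and T: "finite T" "T \<subseteq> carrier G"
  obtains R where "R \<subseteq> H" "finite R" "card R \<le> k ^ (n * card T)"
    "\<And>x. x \<in> H \<Longrightarrow> \<exists>r\<in>R. \<forall>i<n. \<forall>t\<in>T. inv (r i) \<otimes> x i \<in> centralizer_elem G t"
proof -
  let ?I = "{..<n} \<times> T" and ?C = "centralizer_elem G"
  (* The hypothesis counts right cosets, hence the inverses: C r^-1 = C x^-1 iff r^-1 x is in C. *)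
  define \<sigma> where "\<sigma> x = restrict (\<lambda>(i, t). ?C t #> inv (x i)) ?I" for x
  have Hc: "x i \<in> carrier G" if "x \<in> H" "i < n" for x i
    using subgroup.subset[OF H] that by (auto simp: PiE_iff)
  have C: "subgroup (?C t) G" if "t \<in> T" for t
    using subgroup_centralizer_elem T that by blast
  have \<sigma>H: "\<sigma> ` H \<subseteq> (\<Pi>\<^sub>E (i, t)\<in>?I. rcosets (?C t))"
  proof (rule image_subsetI)
    fix x assume "x \<in> H"
    then show "\<sigma> x \<in> (\<Pi>\<^sub>E (i, t)\<in>?I. rcosets (?C t))"
      unfolding \<sigma>_def restrict_PiE_iff using Hc C by (auto intro!: rcosetsI subgroup.subset)
  qed
  have fin: "finite (\<Pi>\<^sub>E (i, t)\<in>?I. rcosets (?C t))"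
    using T index by (intro finite_PiE) auto
  have "card (\<Pi>\<^sub>E (i, t)\<in>?I. rcosets (?C t)) = (\<Prod>(i, t)\<in>?I. card (rcosets (?C t)))"
    using T by (simp add: card_PiE case_prod_beta)
  also have "\<dots> \<le> (\<Prod>_\<in>?I. k)"
    using T index by (intro prod_mono) auto
  finally have card: "card (\<Pi>\<^sub>E (i, t)\<in>?I. rcosets (?C t)) \<le> k ^ (n * card T)"
    by (simp add: card_cartesian_product)
  obtain R where R: "R \<subseteq> H" "finite R" "card R \<le> card (\<Pi>\<^sub>E (i, t)\<in>?I. rcosets (?C t))"
    and repr: "\<And>x. x \<in> H \<Longrightarrow> \<exists>r\<in>R. \<sigma> r = \<sigma> x"
    using finite_image_representatives[OF \<sigma>H fin] by blast
  show ?thesis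
  proof (rule that[OF R(1,2) order_trans[OF R(3) card]])
    fix x assume x: "x \<in> H"
    then obtain r where r: "r \<in> R" "\<sigma> r = \<sigma> x" using repr by blast
    have "inv (r i) \<otimes> x i \<in> ?C t" if "i < n" "t \<in> T" for i t
      using fun_cong[OF r(2), of "(i, t)"] that Hc x r R
      by (intro rcos_inv_eqD[OF C[OF that(2)]]) (auto simp: \<sigma>_def)
    then show "\<exists>r\<in>R. \<forall>i<n. \<forall>t\<in>T. inv (r i) \<otimes> x i \<in> ?C t" using r by blast
  qed
qed

lemma (in group) translate_inv_cancel:
  assumes "a \<in> carrier G" "b \<in> carrier G" "c \<in> carrier G" "c' \<in> carrier G"
    and "a \<otimes> c = (a \<otimes> inv b) \<otimes> c'"
  shows "c' = b \<otimes> c"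
proof -
  have "a \<otimes> c = a \<otimes> (inv b \<otimes> c')"
    using assms by (simp add: m_assoc)
  then have "c = inv b \<otimes> c'"
    using assms(1-4) by simp
  then show ?thesis
    using assms(2-4) by (simp add: inv_solve_left)
qed

lemma (in group) exists_centralizing_shift:
  assumes index: "\<And>a. a \<in> carrier G \<Longrightarrow>
      finite (rcosets (centralizer_elem G a)) \<and> card (rcosets (centralizer_elem G a)) \<le> k"
    and H: "subgroup H (product_group {..<n} (\<lambda>_. G))" and T: "finite T" "T \<subseteq> carrier G"
    and large: "k_large (product_group {..<n} (\<lambda>_. G)) H K S" and K: "2 * k ^ (n * card T) \<le> K"
    and S: "S \<subseteq> H" and h: "h \<in> H"
  obtains d where "d \<in> S" "h \<otimes>\<^bsub>product_group {..<n} (\<lambda>_. G)\<^esub> d \<in> S"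
    "\<forall>i<n. \<forall>t\<in>T. d i \<in> centralizer_elem G t"
proof -
  let ?P = "product_group {..<n} (\<lambda>_. G)"
  interpret P: group ?P by (simp add: is_group)
  obtain R where R: "R \<subseteq> H" "finite R" "card R \<le> k ^ (n * card T)"
    and repr: "\<And>x. x \<in> H \<Longrightarrow> \<exists>r\<in>R. \<forall>i<n. \<forall>t\<in>T. inv (r i) \<otimes> x i \<in> centralizer_elem G t"
    using centralizing_representatives[OF index H T] by blast
  have HP: "H \<subseteq> carrier ?P" using subgroup.subset[OF H] .
  define A where "A = R \<union> (\<lambda>r. r \<otimes>\<^bsub>?P\<^esub> inv\<^bsub>?P\<^esub> h) ` R"
  obtain r0 where r0: "r0 \<in> R" using repr[OF subgroup.one_closed[OF H]] by blast
  have "finite A" "A \<noteq> {}" using R(2) r0 unfolding A_def by auto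
  moreover have "A \<subseteq> H"
    using R(1) subgroup.m_closed[OF H] subgroup.m_inv_closed[OF H h] unfolding A_def by blast
  moreover have "card A \<le> K"
    using card_Un_le[of R "(\<lambda>r. r \<otimes>\<^bsub>?P\<^esub> inv\<^bsub>?P\<^esub> h) ` R"]
      card_image_le[OF R(2), of "\<lambda>r. r \<otimes>\<^bsub>?P\<^esub> inv\<^bsub>?P\<^esub> h"] R(3) K
    unfolding A_def by linarith
  ultimately obtain x where x: "\<And>a. a \<in> A \<Longrightarrow> x \<in> a <#\<^bsub>?P\<^esub> S"
    using k_large_common_point[OF large] by metis
  have "x \<in> r0 <#\<^bsub>?P\<^esub> S" using x r0 unfolding A_def by blast
  then have "x \<in> H"
    using R(1) S subgroup.m_closed[OF H] r0 unfolding l_coset_def by blast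
  then obtain r where r: "r \<in> R" and rx: "\<forall>i<n. \<forall>t\<in>T. inv (r i) \<otimes> x i \<in> centralizer_elem G t"
    using repr by blast
  obtain d where d: "d \<in> S" "x = r \<otimes>\<^bsub>?P\<^esub> d"
    using x[of r] r unfolding A_def l_coset_def by blast
  obtain d' where d': "d' \<in> S" "x = (r \<otimes>\<^bsub>?P\<^esub> inv\<^bsub>?P\<^esub> h) \<otimes>\<^bsub>?P\<^esub> d'"
    using x[of "r \<otimes>\<^bsub>?P\<^esub> inv\<^bsub>?P\<^esub> h"] r unfolding A_def l_coset_def by blast
  have carrier: "r \<in> carrier ?P" "h \<in> carrier ?P" "d \<in> carrier ?P" "d' \<in> carrier ?P"
    using r R h d d' S HP by auto
  have "d' = h \<otimes>\<^bsub>?P\<^esub> d"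
    using P.translate_inv_cancel[OF carrier] d(2) d'(2) by simp
  moreover have "d i = inv (r i) \<otimes> x i" if "i < n" for i
    using d(2) carrier that by (auto simp: PiE_iff m_assoc[symmetric])
  ultimately show ?thesis
    using that d(1) d'(1) rx by auto
qed

lemma k_large_nonempty:
  assumes "k_large P H K S" "0 < K" "H \<noteq> {}"
  shows "S \<noteq> {}"
proof -
  obtain a where "a \<in> H" using assms(3) by blast
  then have "(\<Inter>i<K. a <#\<^bsub>P\<^esub> S) \<noteq> {}"
    using assms(1) unfolding k_large_def by (elim allE[of _ "\<lambda>_. a"]) simp
  then have "a <#\<^bsub>P\<^esub> S \<noteq> {}"
    using assms(2) by (simp add: INT_constant lessThan_empty_iff)
  then show ?thesis
    by (auto simp: l_coset_def)
qed

lemma (in group) word_eval_eq_at_one_on_large_level_set: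
  assumes index: "\<And>a. a \<in> carrier G \<Longrightarrow>
      finite (rcosets (centralizer_elem G a)) \<and> card (rcosets (centralizer_elem G a)) \<le> k"
    and k: "k \<ge> 1" and H: "subgroup H (product_group {..<n} (\<lambda>_. G))"
    and w: "word_in_vars n m w" and g: "\<forall>j<m. g j \<in> carrier G"
    and large: "k_large (product_group {..<n} (\<lambda>_. G)) H (2 * k ^ (n\<^sup>2 + m * n))
      {h \<in> H. word_eval G w h g = c}"
    and h: "h \<in> H"
  shows "word_eval G w h g = word_eval G w (\<lambda>_. \<one>) g"
proof -
  let ?P = "product_group {..<n} (\<lambda>_. G)" and ?T = "h ` {..<n} \<union> g ` {..<m}"
    and ?S = "{h \<in> H. word_eval G w h g = c}"
  have hc: "\<forall>i<n. h i \<in> carrier G"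
    using subgroup.subset[OF H] h by (auto simp: PiE_iff)
  have T: "finite ?T" "?T \<subseteq> carrier G" using hc g by auto
  have "card ?T \<le> n + m"
    using card_Un_le[of "h ` {..<n}" "g ` {..<m}"] card_image_le[of "{..<n}" h]
      card_image_le[of "{..<m}" g] by simp
  then have "n * card ?T \<le> n\<^sup>2 + m * n"
    using mult_le_mono2[of "card ?T" "n + m" n] by (simp add: power2_eq_square algebra_simps)
  then have K: "2 * k ^ (n * card ?T) \<le> 2 * k ^ (n\<^sup>2 + m * n)"
    using power_increasing[OF _ k] by simp
  obtain d where d: "d \<in> ?S" "h \<otimes>\<^bsub>?P\<^esub> d \<in> ?S"
    and d_cent: "\<forall>i<n. \<forall>t\<in>?T. d i \<in> centralizer_elem G t"
    using exists_centralizing_shift[OF index H T large K _ h] by blast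
  have "word_eval G w (\<lambda>i. h i \<otimes> d i) g = word_eval G w (h \<otimes>\<^bsub>?P\<^esub> d) g"
    by (rule word_eval_cong[OF w]) simp
  also have "\<dots> = word_eval G w d g"
    using d by simp
  finally show ?thesis
    using d_cent by (intro word_eval_eq_at_one_if_commuting_shift[OF w hc g]) auto
qed

theorem theorem3p3:
  fixes G1 :: "('a, 'c) monoid_scheme" and k n m :: nat
    and G :: "(nat \<Rightarrow> 'a) set" and w :: gword and g :: "nat \<Rightarrow> 'a" and c :: 'a
  assumes "group G1"
    and "k \<ge> 1"
    and "\<And>a. a \<in> carrier G1 \<Longrightarrow>
           finite (rcosets\<^bsub>G1\<^esub> (centralizer_elem G1 a)) \<and>
           card (rcosets\<^bsub>G1\<^esub> (centralizer_elem G1 a)) \<le> k"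
    and "subgroup G (product_group {..<n} (\<lambda>_. G1))"
    and "word_in_vars n m w"
    and "\<forall>j<m. g j \<in> carrier G1"
    and "c \<in> carrier G1"
    and "k_large (product_group {..<n} (\<lambda>_. G1)) G (2 * k ^ (n\<^sup>2 + m * n))
           {h \<in> G. word_eval G1 w h g = c}"
  shows "\<forall>h \<in> G. word_eval G1 w h g = c"
proof
  interpret G1: group G1 by fact
  have const: "word_eval G1 w h g = word_eval G1 w (\<lambda>_. \<one>\<^bsub>G1\<^esub>) g" if "h \<in> G" for h
    using assms(3,2,4-6,8) that by (rule G1.word_eval_eq_at_one_on_large_level_set)
  have "G \<noteq> {}" using subgroup.one_closed[OF assms(4)] by blast
  then obtain s where s: "s \<in> G" "word_eval G1 w s g = c"
    using k_large_nonempty[OF assms(8)] assms(2) by auto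
  fix h assume "h \<in> G"
  then have "word_eval G1 w h g = word_eval G1 w (\<lambda>_. \<one>\<^bsub>G1\<^esub>) g" by (rule const)
  also have "\<dots> = word_eval G1 w s g" using const[OF s(1)] by simp
  finally show "word_eval G1 w h g = c" using s(2) by simp
qed

end
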